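(* Let $\Gamma$ be a free group on two generators $\xi,\eta$ and let $k\ge 2$. Let $\Psi^k$ be the set of reduced words of length exactly $k$. Call a pair $(\gamma,\psi)$ a group-theoretical relation of level $k$ if $\gamma\in\Gamma\setminus\{1\}$ has reduced length $|\gamma|\le k$, $\psi\in\Psi^k$, and the reduced length of the product satisfies $|\gamma\psi|\le k$. Then the number of group-theoretical relations of level $k$ equals $R_k=4\cdot r_k\cdot 3^{k-1}$, where $$r_k=1+\sum_{i=1}^{k-1}\Bigl(1+2\sum_{j=1}^{\min\{i,k-i\}}3^{j-1}\Bigr),$$ and equivalently $r_k=\sum_{j=0}^{k}a_j$ with $a_0=a_1=1$, $a_j=1+2\sum_{i=1}^{\lfloor j/2\rfloor}3^{i-1}$ for $2\le j\le k-1$, and $a_k=2\sum_{i=1}^{\lfloor k/2\rfloor}3^{i-1}$.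
   Context: $|w|$ denotes the length of the reduced word representing $w$ in the free basis $\{\xi,\eta\}$. (For example, for $k=2$ there are $48$ such relations.) *)

theory Defs
  imports Main
begin

text \<open>Free group on two generators xi, eta, modelled by reduced words.
  A letter is a generator together with an exponent sign (True = inverse).\<close>

datatype gen = Xi | Eta

type_synonym letter = "gen \<times> bool"

definition inv_letter :: "letter \<Rightarrow> letter" where
  "inv_letter x = (fst x, \<not> snd x)"

fun reduced :: "letter list \<Rightarrow> bool" where
  "reduced [] = True"
| "reduced [x] = True"
| "reduced (x # y # ys) = (y \<noteq> inv_letter x \<and> reduced (y # ys))"

definition red_cons :: "letter \<Rightarrow> letter list \<Rightarrow> letter list" where
  "red_cons x ws = (case ws of [] \<Rightarrow> [x]
                    | y # ys \<Rightarrow> (if y = inv_letter x then ys else x # ws))"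

definition reduce :: "letter list \<Rightarrow> letter list" where
  "reduce w = foldr red_cons w []"

definition fg_mult :: "letter list \<Rightarrow> letter list \<Rightarrow> letter list" where
  "fg_mult u v = reduce (u @ v)"

definition gt_relations :: "nat \<Rightarrow> (letter list \<times> letter list) set" where
  "gt_relations k = {(\<gamma>, \<psi>). reduced \<gamma> \<and> \<gamma> \<noteq> [] \<and> length \<gamma> \<le> k
      \<and> reduced \<psi> \<and> length \<psi> = k \<and> length (fg_mult \<gamma> \<psi>) \<le> k}"

definition r_seq :: "nat \<Rightarrow> nat" where
  "r_seq k = 1 + (\<Sum>i = 1..k-1. 1 + 2 * (\<Sum>j = 1..min i (k - i). 3 ^ (j - 1)))"

definition a_seq :: "nat \<Rightarrow> nat \<Rightarrow> nat" where
  "a_seq k j = (if j \<le> 1 then 1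
     else if j \<le> k - 1 then 1 + 2 * (\<Sum>i = 1..j div 2. 3 ^ (i - 1))
     else 2 * (\<Sum>i = 1..k div 2. 3 ^ (i - 1)))"

end

theory Submission
  imports Defs
begin

text \<open>In the free reduction of \<open>\<gamma>\<psi>\<close> the cancelled letters form the longest common
  prefix of \<open>\<gamma>\<^sup>-\<^sup>1\<close> and \<open>\<psi>\<close>; if it has length \<open>c\<close> then \<open>|\<gamma>\<psi>| = |\<gamma>| + |\<psi>| - 2c\<close>.
  So for \<open>|\<gamma>| = n \<le> k = |\<psi>|\<close> we have \<open>|\<gamma>\<psi>| \<le> k\<close> iff \<open>\<gamma>\<^sup>-\<^sup>1\<close> starts with the first
  \<open>(n + 1) div 2\<close> letters of \<open>\<psi>\<close>; the remaining \<open>n div 2\<close> letters of \<open>\<gamma>\<^sup>-\<^sup>1\<close> can be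
  chosen in \<open>3 ^ (n div 2)\<close> ways. Summing over the \<open>4 * 3 ^ (k - 1)\<close> words \<open>\<psi>\<close> and over
  \<open>n = 1..k\<close> counts the relations, and both closed forms of \<open>r\<^sub>k\<close> evaluate
  \<open>\<Sum>n = 1..k. 3 ^ (n div 2)\<close> because \<open>1 + 2 * (1 + 3 + \<dots> + 3 ^ (m - 1)) = 3 ^ m\<close>.\<close>

lemma inv_letter_inv_letter [simp]: "inv_letter (inv_letter x) = x"
  by (simp add: inv_letter_def)

lemma reduced_Cons: "reduced (x # xs) \<longleftrightarrow> reduced xs \<and> (xs \<noteq> [] \<longrightarrow> hd xs \<noteq> inv_letter x)"
  by (cases xs) auto

lemma reduced_append:
  "reduced (xs @ ys) \<longleftrightarrow>
     reduced xs \<and> reduced ys \<and> (xs \<noteq> [] \<longrightarrow> ys \<noteq> [] \<longrightarrow> hd ys \<noteq> inv_letter (last xs))"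
  by (induction xs) (auto simp: reduced_Cons)

lemma reduced_append_nonempty: "q \<noteq> [] \<Longrightarrow> reduced (q @ w) \<longleftrightarrow> reduced q \<and> reduced (last q # w)"
  by (auto simp: reduced_append reduced_Cons)

lemma reduced_take: "reduced xs \<Longrightarrow> reduced (take n xs)"
  by (metis append_take_drop_id reduced_append)

lemma reduced_drop: "reduced xs \<Longrightarrow> reduced (drop n xs)"
  by (metis append_take_drop_id reduced_append)

definition inv_word :: "letter list \<Rightarrow> letter list" where
  "inv_word w = rev (map inv_letter w)"

lemma inv_word_simps [simp]:
  "inv_word [] = []"
  "inv_word (x # xs) = inv_word xs @ [inv_letter x]"
  "inv_word (xs @ ys) = inv_word ys @ inv_word xs"
  "inv_word (inv_word xs) = xs"
  "length (inv_word xs) = length xs"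
  "inv_word xs = [] \<longleftrightarrow> xs = []"
  by (auto simp: inv_word_def rev_map[symmetric] map_map o_def)

lemma inj_inv_word: "inj inv_word"
  by (metis injI inv_word_simps(4))

lemma image_inv_word: "inv_word ` A = {w. inv_word w \<in> A}"
  by (auto intro: image_eqI[where x = "inv_word w" for w])

lemma last_inv_word: "xs \<noteq> [] \<Longrightarrow> last (inv_word xs) = inv_letter (hd xs)"
  by (cases xs) auto

lemma reduced_inv_word [simp]: "reduced (inv_word xs) \<longleftrightarrow> reduced xs"
  by (induction xs) (auto simp: reduced_append reduced_Cons last_inv_word)

lemma foldr_red_cons_reduced: "reduced (u @ v) \<Longrightarrow> foldr red_cons u v = u @ v"
  by (induction u) (auto simp: red_cons_def reduced_Cons split: list.split)

lemma foldr_red_cons_cancel: "foldr red_cons (u @ inv_word p) (p @ v) = foldr red_cons u v"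
  by (induction p) (auto simp: red_cons_def)

lemma fg_mult_reduced_right: "reduced \<psi> \<Longrightarrow> fg_mult \<gamma> \<psi> = foldr red_cons \<gamma> \<psi>"
  using foldr_red_cons_reduced[of \<psi> "[]"] by (simp add: fg_mult_def reduce_def)

fun common_prefix_length :: "'a list \<Rightarrow> 'a list \<Rightarrow> nat" where
  "common_prefix_length (x # xs) (y # ys) =
     (if x = y then Suc (common_prefix_length xs ys) else 0)"
| "common_prefix_length _ _ = 0"

lemma common_prefix_length_le:
  "common_prefix_length xs ys \<le> length xs" "common_prefix_length xs ys \<le> length ys"
  by (induction xs ys rule: common_prefix_length.induct) auto

lemma take_common_prefix_length:
  "take (common_prefix_length xs ys) xs = take (common_prefix_length xs ys) ys"
  by (induction xs ys rule: common_prefix_length.induct) auto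

lemma common_prefix_length_greatest:
  "\<lbrakk>j \<le> length xs; j \<le> length ys; take j xs = take j ys\<rbrakk> \<Longrightarrow> j \<le> common_prefix_length xs ys"
proof (induction xs ys arbitrary: j rule: common_prefix_length.induct)
  case (1 x xs y ys)
  then show ?case by (cases j) auto
qed auto

lemma nth_common_prefix_length_neq:
  "\<lbrakk>common_prefix_length xs ys < length xs; common_prefix_length xs ys < length ys\<rbrakk>
     \<Longrightarrow> xs ! common_prefix_length xs ys \<noteq> ys ! common_prefix_length xs ys"
  by (induction xs ys rule: common_prefix_length.induct) auto

lemma take_eq_iff_le_common_prefix_length:
  assumes "j \<le> length xs" "j \<le> length ys"
  shows "take j xs = take j ys \<longleftrightarrow> j \<le> common_prefix_length xs ys"
  using assms common_prefix_length_greatest take_common_prefix_length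
  by (metis min.absorb1 take_take)

lemma length_fg_mult:
  assumes "reduced \<gamma>" "reduced \<psi>"
  shows "length (fg_mult \<gamma> \<psi>) = length \<gamma> + length \<psi> - 2 * common_prefix_length (inv_word \<gamma>) \<psi>"
proof -
  define g where "g = inv_word \<gamma>"
  define c where "c = common_prefix_length g \<psi>"
  have c_le: "c \<le> length g" "c \<le> length \<psi>"
    using common_prefix_length_le c_def by auto
  have \<gamma>_split: "\<gamma> = inv_word (drop c g) @ inv_word (take c g)"
    by (metis g_def inv_word_simps(3,4) append_take_drop_id)
  have \<psi>_split: "\<psi> = take c g @ drop c \<psi>"
    using take_common_prefix_length[of g \<psi>] c_def by simp
  have "hd (drop c \<psi>) \<noteq> hd (drop c g)" if "drop c g \<noteq> []" "drop c \<psi> \<noteq> []"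
    using that nth_common_prefix_length_neq[of g \<psi>] c_def by (simp add: hd_drop_conv_nth)
  then have rest_reduced: "reduced (inv_word (drop c g) @ drop c \<psi>)"
    using assms by (auto simp: g_def reduced_append reduced_drop last_inv_word)
  have "fg_mult \<gamma> \<psi> = foldr red_cons \<gamma> \<psi>"
    by (rule fg_mult_reduced_right[OF assms(2)])
  also have "\<dots> = foldr red_cons (inv_word (drop c g)) (drop c \<psi>)"
    by (subst \<gamma>_split, subst \<psi>_split, rule foldr_red_cons_cancel)
  also have "\<dots> = inv_word (drop c g) @ drop c \<psi>"
    by (rule foldr_red_cons_reduced[OF rest_reduced])
  finally show ?thesis using c_le by (simp add: c_def g_def)
qed

lemma length_fg_mult_le_iff:
  assumes "reduced \<gamma>" "reduced \<psi>" "length \<gamma> \<le> length \<psi>"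
  shows "length (fg_mult \<gamma> \<psi>) \<le> length \<psi> \<longleftrightarrow>
           take ((length \<gamma> + 1) div 2) (inv_word \<gamma>) = take ((length \<gamma> + 1) div 2) \<psi>"
proof -
  have "common_prefix_length (inv_word \<gamma>) \<psi> \<le> length \<gamma>"
    using common_prefix_length_le(1)[of "inv_word \<gamma>" \<psi>] by simp
  then show ?thesis
    using assms length_fg_mult[OF assms(1,2)]
    by (subst take_eq_iff_le_common_prefix_length) auto
qed

lemma UNIV_letter: "(UNIV :: letter set) = {(Xi, False), (Xi, True), (Eta, False), (Eta, True)}"
  by (auto intro: gen.exhaust)

lemma finite_UNIV_letter: "finite (UNIV :: letter set)"
  by (simp add: UNIV_letter)

lemma card_UNIV_letter: "card (UNIV :: letter set) = 4"
  by (simp add: UNIV_letter)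

definition reduced_words :: "nat \<Rightarrow> letter list set" where
  "reduced_words n = {w. reduced w \<and> length w = n}"

definition reduced_continuations :: "letter \<Rightarrow> nat \<Rightarrow> letter list set" where
  "reduced_continuations a n = {w. length w = n \<and> reduced (a # w)}"

lemma finite_letter_lists_length: "finite {w :: letter list. length w = n}"
  using finite_lists_length_eq[OF finite_UNIV_letter] by simp

lemma finite_reduced_words: "finite (reduced_words n)"
  unfolding reduced_words_def by (rule finite_subset[OF _ finite_letter_lists_length[of n]]) auto

lemma finite_reduced_continuations: "finite (reduced_continuations a n)"
  unfolding reduced_continuations_def
  by (rule finite_subset[OF _ finite_letter_lists_length[of n]]) auto

lemma reduced_continuations_Suc:
  "reduced_continuations a (Suc n) =
     (\<Union>b \<in> UNIV - {inv_letter a}. (#) b ` reduced_continuations b n)"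
  unfolding reduced_continuations_def by (auto simp: length_Suc_conv)

lemma card_reduced_continuations: "card (reduced_continuations a n) = 3 ^ n"
proof (induction n arbitrary: a)
  case 0
  have "reduced_continuations a 0 = {[]}" by (auto simp: reduced_continuations_def)
  then show ?case by simp
next
  case (Suc n)
  have "card (reduced_continuations a (Suc n)) =
          (\<Sum>b \<in> UNIV - {inv_letter a}. card ((#) b ` reduced_continuations b n))"
    unfolding reduced_continuations_Suc
    by (rule card_UN_disjoint) (auto simp: finite_UNIV_letter finite_reduced_continuations)
  also have "\<dots> = (\<Sum>b \<in> UNIV - {inv_letter a}. 3 ^ n)"
    by (rule sum.cong) (auto simp: card_image Suc)
  also have "\<dots> = 3 ^ Suc n"
    by (simp add: card_Diff_singleton finite_UNIV_letter card_UNIV_letter)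
  finally show ?case .
qed

lemma card_reduced_words_Suc: "card (reduced_words (Suc n)) = 4 * 3 ^ n"
proof -
  have "reduced_words (Suc n) = (\<Union>a. (#) a ` reduced_continuations a n)"
    by (auto simp: reduced_words_def reduced_continuations_def length_Suc_conv)
  then have "card (reduced_words (Suc n)) = (\<Sum>a \<in> UNIV. card ((#) a ` reduced_continuations a n))"
    by (simp, intro card_UN_disjoint)
       (auto simp: finite_UNIV_letter finite_reduced_continuations)
  also have "\<dots> = (\<Sum>a \<in> (UNIV :: letter set). 3 ^ n)"
    by (rule sum.cong) (auto simp: card_image card_reduced_continuations)
  finally show ?thesis by (simp add: card_UNIV_letter)
qed

lemma card_reduced_words_with_prefix:
  assumes "reduced q" "q \<noteq> []" "length q \<le> n"
  shows "card {w \<in> reduced_words n. take (length q) w = q} = 3 ^ (n - length q)"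
proof -
  have "{w \<in> reduced_words n. take (length q) w = q} =
          (@) q ` reduced_continuations (last q) (n - length q)"
  proof (rule set_eqI, rule iffI)
    fix w assume w: "w \<in> {w \<in> reduced_words n. take (length q) w = q}"
    then have "w = q @ drop (length q) w"
      by (metis (mono_tags, lifting) append_take_drop_id mem_Collect_eq)
    with w show "w \<in> (@) q ` reduced_continuations (last q) (n - length q)"
      using reduced_append_nonempty[OF assms(2), of "drop (length q) w"]
      by (auto simp: reduced_words_def reduced_continuations_def intro!: image_eqI)
  qed (use assms reduced_append_nonempty[OF assms(2)] in
       \<open>auto simp: reduced_words_def reduced_continuations_def\<close>)
  then show ?thesis
    by (simp add: card_image inj_on_def card_reduced_continuations)
qed

definition short_product_partners :: "letter list \<Rightarrow> nat \<Rightarrow> letter list set" where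
  "short_product_partners \<psi> n =
     {\<gamma> \<in> reduced_words n. length (fg_mult \<gamma> \<psi>) \<le> length \<psi>}"

lemma short_product_partners_eq:
  assumes "reduced \<psi>" "n \<le> length \<psi>"
  shows "short_product_partners \<psi> n =
           inv_word ` {w \<in> reduced_words n. take ((n + 1) div 2) w = take ((n + 1) div 2) \<psi>}"
  using assms length_fg_mult_le_iff
  by (auto simp: image_inv_word short_product_partners_def reduced_words_def)

lemma card_short_product_partners:
  assumes "reduced \<psi>" "1 \<le> n" "n \<le> length \<psi>"
  shows "card (short_product_partners \<psi> n) = 3 ^ (n div 2)"
proof -
  define q where "q = take ((n + 1) div 2) \<psi>"
  have q: "reduced q" "q \<noteq> []" "length q = (n + 1) div 2"
    using assms by (auto simp: q_def reduced_take)
  have "card (short_product_partners \<psi> n) =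
          card (inv_word ` {w \<in> reduced_words n. take (length q) w = q})"
    unfolding q(3) by (simp add: short_product_partners_eq assms q_def)
  also have "\<dots> = card {w \<in> reduced_words n. take (length q) w = q}"
    by (rule card_image[OF inj_on_subset[OF inj_inv_word subset_UNIV]])
  also have "\<dots> = 3 ^ (n - (n + 1) div 2)"
    using q assms(2) by (subst card_reduced_words_with_prefix) auto
  also have "n - (n + 1) div 2 = n div 2"
    by simp
  finally show ?thesis .
qed

lemma finite_short_product_partners: "finite (short_product_partners \<psi> n)"
  unfolding short_product_partners_def using finite_reduced_words by simp

lemma gt_relations_eq:
  "gt_relations k =
     (\<lambda>(\<psi>, \<gamma>). (\<gamma>, \<psi>)) ` (SIGMA \<psi>:reduced_words k. \<Union>n \<in> {1..k}. short_product_partners \<psi> n)"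
  by (force simp: gt_relations_def short_product_partners_def reduced_words_def Suc_le_eq)

lemma card_gt_relations:
  "card (gt_relations (Suc k)) = 4 * 3 ^ k * (\<Sum>n = 1..Suc k. 3 ^ (n div 2))"
proof -
  have "card (gt_relations (Suc k)) =
          (\<Sum>\<psi> \<in> reduced_words (Suc k). card (\<Union>n \<in> {1..Suc k}. short_product_partners \<psi> n))"
    unfolding gt_relations_eq
    by (subst card_image) (auto simp: inj_on_def card_SigmaI finite_reduced_words
        finite_short_product_partners)
  also have "\<dots> = (\<Sum>\<psi> \<in> reduced_words (Suc k). \<Sum>n = 1..Suc k. card (short_product_partners \<psi> n))"
    by (intro sum.cong refl card_UN_disjoint)
       (simp_all add: finite_short_product_partners,
        auto simp: short_product_partners_def reduced_words_def)
  also have "\<dots> = (\<Sum>\<psi> \<in> reduced_words (Suc k). \<Sum>n = 1..Suc k. 3 ^ (n div 2))"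
    by (intro sum.cong refl) (simp add: card_short_product_partners reduced_words_def)
  finally show ?thesis
    by (simp add: card_reduced_words_Suc)
qed

lemma one_plus_twice_geometric_sum: "1 + 2 * (\<Sum>j = 1..m. (3::nat) ^ (j - 1)) = 3 ^ m"
  by (induction m) (simp_all add: algebra_simps)

lemma sum_power_min_eq_sum_power_half:
  "(\<Sum>i = 1..k - 1. (3::nat) ^ min i (k - i)) = (\<Sum>n = 2..k. 3 ^ (n div 2))"
proof (rule sum.reindex_bij_witness[where j = "\<lambda>i. if i \<le> k div 2 then 2 * i else 2 * (k - i) + 1"
      and i = "\<lambda>n. if even n then n div 2 else k - n div 2"])
  fix i assume "i \<in> {1..k - 1}"
  then have "(if i \<le> k div 2 then 2 * i else 2 * (k - i) + 1) div 2 = min i (k - i)"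
    by (auto; presburger)
  then show "3 ^ ((if i \<le> k div 2 then 2 * i else 2 * (k - i) + 1) div 2) = (3::nat) ^ min i (k - i)"
    by simp
qed (auto; presburger)+

lemma r_seq_eq_sum: "k \<ge> 1 \<Longrightarrow> r_seq k = (\<Sum>n = 1..k. 3 ^ (n div 2))"
proof -
  assume "k \<ge> 1"
  have "r_seq k = 1 + (\<Sum>i = 1..k - 1. (3::nat) ^ min i (k - i))"
    unfolding r_seq_def using one_plus_twice_geometric_sum by simp
  also have "\<dots> = 1 + (\<Sum>n = 2..k. 3 ^ (n div 2))"
    using sum_power_min_eq_sum_power_half[of k] by simp
  also have "\<dots> = (\<Sum>n = 1..k. 3 ^ (n div 2))"
    using \<open>k \<ge> 1\<close> by (subst sum.atLeast_Suc_atMost[of 1 k]) (simp_all add: numeral_2_eq_2)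
  finally show ?thesis .
qed

lemma sum_a_seq_eq_sum:
  assumes "k \<ge> 1"
  shows "(\<Sum>j = 0..Suc k. a_seq (Suc k) j) = (\<Sum>n = 1..Suc k. 3 ^ (n div 2))"
proof -
  have a_below: "a_seq (Suc k) j = 3 ^ (j div 2)" if "j \<le> k" for j
    using that one_plus_twice_geometric_sum[of "j div 2"] by (auto simp: a_seq_def)
  \<comment> \<open>the missing \<open>1\<close> in \<open>a\<^sub>k\<close> is the extra term \<open>a\<^sub>0\<close>\<close>
  have a_last: "a_seq (Suc k) (Suc k) + 1 = 3 ^ (Suc k div 2)"
    using assms one_plus_twice_geometric_sum[of "Suc k div 2"] by (simp add: a_seq_def)
  have "(\<Sum>j = 0..Suc k. a_seq (Suc k) j) + 1 = (\<Sum>j = 0..k. 3 ^ (j div 2)) + 3 ^ (Suc k div 2)"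
    using a_below a_last by simp
  also have "\<dots> = 1 + (\<Sum>n = 1..Suc k. 3 ^ (n div 2))"
    by (simp add: sum.atLeast_Suc_atMost)
  finally show ?thesis by simp
qed

theorem lemma2p2:
  fixes k :: nat
  assumes "k \<ge> 2"
  shows "card (gt_relations k) = 4 * r_seq k * 3 ^ (k - 1)
       \<and> r_seq k = (\<Sum>j = 0..k. a_seq k j)"
proof -
  obtain l where k: "k = Suc l" using assms by (cases k) auto
  have r_seq: "r_seq k = (\<Sum>n = 1..k. 3 ^ (n div 2))"
    using assms by (simp add: r_seq_eq_sum)
  have "card (gt_relations k) = 4 * 3 ^ (k - 1) * (\<Sum>n = 1..k. 3 ^ (n div 2))"
    unfolding k by (simp only: card_gt_relations diff_Suc_1)
  then have "card (gt_relations k) = 4 * r_seq k * 3 ^ (k - 1)"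
    by (simp add: r_seq)
  moreover have "(\<Sum>j = 0..k. a_seq k j) = (\<Sum>n = 1..k. 3 ^ (n div 2))"
    unfolding k by (rule sum_a_seq_eq_sum) (use assms k in simp)
  ultimately show ?thesis
    by (simp add: r_seq)
qed

end
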